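(* For all $\lambda,\mu\in\Lambda(n,r)$ and every nonzero $a\in 1_\lambda\hat S(n,r)1_\mu$, one has $a\,\rho(a)\neq0$ (an element of $1_\lambda\hat S(n,r)1_\lambda$) and $\rho(a)\,a\neq 0$ (an element of $1_\mu\hat S(n,r)1_\mu$).
   Context: Fix integers $n\ge3$, $r\ge1$; indices are read modulo $n$. $\hat U=\hat{\mathbf U}_q(\hat{\mathfrak{gl}}_n)$ is the associative unital $\mathbb{Q}(q)$-algebra generated by $R^{\pm1}$, $K_i^{\pm1}$, $E_i$, $E_{-i}$ ($1\le i\le n$) subject to: the $K_i^{\pm1}$ pairwise commute and $K_iK_i^{-1}=K_i^{-1}K_i=1$; $E_iE_{-j}-E_{-j}E_i=\delta_{ij}\frac{K_iK_{i+1}^{-1}-K_i^{-1}K_{i+1}}{q-q^{-1}}$; $K_iE_{\pm j}=q^{\pm(\delta_{i,j}-\delta_{i,j+1})}E_{\pm j}K_i$; for $\epsilon,\delta\in\{1,-1\}$, $E_{\epsilon i}^2E_{\epsilon(i+\delta)}-(q+q^{-1})E_{\epsilon i}E_{\epsilon(i+\delta)}E_{\epsilon i}+E_{\epsilon(i+\delta)}E_{\epsilon i}^2=0$; $E_{\epsilon i}E_{\epsilon j}=E_{\epsilon j}E_{\epsilon i}$ if $j\not\equiv i\pm1\pmod n$; $RR^{-1}=R^{-1}R=1$; $RXR^{-1}=X'$ for $(X,X')\in\{(E_i,E_{i+1}),(E_{-i},E_{-(i+1)}),(K_i^{-1},K_{i+1}^{-1})\}$. The coproduct $\Delta$ is the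 algebra map with $\Delta(E_i)=E_i\otimes K_iK_{i+1}^{-1}+1\otimes E_i$, $\Delta(E_{-i})=K_i^{-1}K_{i+1}\otimes E_{-i}+E_{-i}\otimes1$, $\Delta(K_i^{\pm1})=K_i^{\pm1}\otimes K_i^{\pm1}$, $\Delta(R^{\pm1})=R^{\pm1}\otimes R^{\pm1}$. $\rho$ is the $\mathbb{Q}(q)$-linear algebra anti-involution of $\hat U$ with $\rho(E_i)=qK_iK_{i+1}^{-1}E_{-i}$, $\rho(E_{-i})=qK_i^{-1}K_{i+1}E_i$, $\rho(K_i)=K_i$, $\rho(R)=R^{-1}$. $V$ is the $\mathbb{Q}(q)$-vector space with basis $\{e_t\}_{t\in\mathbb{Z}}$, a $\hat U$-module via: $E_ie_{t+1}=e_t$ if $i\equiv t\pmod n$ and $0$ otherwise; $E_{-i}e_t=e_{t+1}$ if $i\equiv t\pmod n$ and $0$ otherwise; $K_i^{\pm1}e_t=q^{\pm1}e_t$ if $i\equiv t\pmod n$ and $e_t$ otherwise; $R^{\pm1}e_t=e_{t\pm1}$; $\hat U$ acts on $V^{\otimes r}$ via the iterated coproduct, giving $\psi_{n,r}\colon\hat U\to\mathrm{End}_{\mathbb{Q}(q)}(V^{\otimes r})$. The affine $q$-Schur algebra is $\hat S(n,r):=\psi_{n,r}(\hat U)$ (by affine Schur–Weyl duality this is the centralizer of the extended affine Hecke algebra action on $V^{\otimes r}$). The bilinear form on $V^{\otimes r}$ is $\langle e_{s_1}\otimes\cdots\otimes e_{s_r},e_{t_1}\otimes\cdots\otimes e_{t_r}\rangle=\prod_j\delta_{s_jt_j}$;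 one has $\langle Xv,w\rangle=\langle v,\rho(X)w\rangle$, so $\rho$ induces a well-defined anti-involution of $\hat S(n,r)$, again denoted $\rho$, by $\rho(\psi_{n,r}(X))=\psi_{n,r}(\rho(X))$. $\Lambda(n,r)=\{\lambda\in\mathbb{N}^n:\sum_i\lambda_i=r\}$; for $\lambda\in\Lambda(n,r)$, $1_\lambda\in\hat S(n,r)$ is the projection of $V^{\otimes r}$ onto the span of those $e_{t_1}\otimes\cdots\otimes e_{t_r}$ with $\#\{j: t_j\equiv i\pmod n\}=\lambda_i$ for all $i$ (so $\rho(1_\lambda)=1_\lambda$ and $\sum_{\lambda}1_\lambda=1$). *)

theory Defs
  imports "HOL-Computational_Algebra.Fraction_Field" "HOL-Computational_Algebra.Polynomial"
begin

text \<open>The ground field Q(q) = rational functions over the rationals, q the indeterminate.\<close>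
type_synonym fq = "rat poly fract"

definition qq :: fq where "qq = Fraction_Field.Fract [:0, 1:] 1"

text \<open>Generators of the quantum affine algebra: R, R^-1, K_i, K_i^-1, E_i, and F i = E_{-i}.
  Indices are integers read modulo n.\<close>
datatype gen = R | Rinv | K int | Kinv int | E int | F int

text \<open>Vectors of V^{\<otimes> r}: coefficient functions on the basis e_{t_1} \<otimes> ... \<otimes> e_{t_r},
  indexed by integer lists t.\<close>
definition bas :: "int list \<Rightarrow> int list \<Rightarrow> fq" where
  "bas t = (\<lambda>u. if u = t then 1 else 0)"

definition tens1 :: "int \<Rightarrow> (int list \<Rightarrow> fq) \<Rightarrow> int list \<Rightarrow> fq" where
  "tens1 s v = (\<lambda>u. case u of [] \<Rightarrow> 0 | a # u' \<Rightarrow> if a = s then v u' else 0)"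

definition ccount :: "nat \<Rightarrow> int \<Rightarrow> int list \<Rightarrow> nat" where
  "ccount n i t = length (filter (\<lambda>j. j mod int n = i mod int n) t)"

text \<open>K_i K_{i+1}^{-1} acts on e_t by qq powi (kt n i t)\<close>
definition kt :: "nat \<Rightarrow> int \<Rightarrow> int list \<Rightarrow> int" where
  "kt n i t = int (ccount n i t) - int (ccount n (i + 1) t)"

text \<open>Action of a generator on a basis tensor e_t via the iterated coproduct
  (Delta^(k+1) = (1 \<otimes> Delta^(k)) \<circ> Delta; on V^{\<otimes>0} the counit acts).\<close>
fun gact :: "nat \<Rightarrow> gen \<Rightarrow> int list \<Rightarrow> int list \<Rightarrow> fq" where
  "gact n R t = bas (map (\<lambda>x. x + 1) t)"
| "gact n Rinv t = bas (map (\<lambda>x. x - 1) t)"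
| "gact n (K i) t = (\<lambda>u. qq powi int (ccount n i t) * bas t u)"
| "gact n (Kinv i) t = (\<lambda>u. qq powi (- int (ccount n i t)) * bas t u)"
| "gact n (E i) [] = (\<lambda>_. 0)"
| "gact n (E i) (s # w) = (\<lambda>u.
      (if (s - 1) mod int n = i mod int n
       then tens1 (s - 1) (\<lambda>u'. qq powi (kt n i w) * bas w u') u else 0)
      + tens1 s (gact n (E i) w) u)"
| "gact n (F i) [] = (\<lambda>_. 0)"
| "gact n (F i) (s # w) = (\<lambda>u.
      qq powi (- kt n i [s]) * tens1 s (gact n (F i) w) u
      + (if s mod int n = i mod int n then tens1 (s + 1) (bas w) u else 0))"

text \<open>Free algebra expressions over the generators (elements of the free algebra,
  which surjects onto U-hat).\<close>
datatype uexp = Gen gen | One | Add uexp uexp | Smul fq uexp | Mul uexp uexp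

text \<open>Operators on V^{\<otimes> r}, given by the images of basis vectors: A t = A(e_t).\<close>
type_synonym op = "int list \<Rightarrow> int list \<Rightarrow> fq"

definition zero_op :: op where "zero_op = (\<lambda>t u. 0)"

text \<open>opcomp A B = A \<circ> B (apply B first)\<close>
definition opcomp :: "op \<Rightarrow> op \<Rightarrow> op" where
  "opcomp A B = (\<lambda>t u. \<Sum>s\<in>{s. B t s \<noteq> 0}. B t s * A s u)"

fun psi :: "nat \<Rightarrow> nat \<Rightarrow> uexp \<Rightarrow> op" where
  "psi n r (Gen g) = (\<lambda>t. if length t = r then gact n g t else (\<lambda>_. 0))"
| "psi n r One = (\<lambda>t. if length t = r then bas t else (\<lambda>_. 0))"
| "psi n r (Add x y) = (\<lambda>t u. psi n r x t u + psi n r y t u)"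
| "psi n r (Smul c x) = (\<lambda>t u. c * psi n r x t u)"
| "psi n r (Mul x y) = opcomp (psi n r x) (psi n r y)"

fun rho :: "uexp \<Rightarrow> uexp" where
  "rho (Gen (E i)) = Smul qq (Mul (Mul (Gen (K i)) (Gen (Kinv (i + 1)))) (Gen (F i)))"
| "rho (Gen (F i)) = Smul qq (Mul (Mul (Gen (Kinv i)) (Gen (K (i + 1)))) (Gen (E i)))"
| "rho (Gen (K i)) = Gen (K i)"
| "rho (Gen (Kinv i)) = Gen (Kinv i)"
| "rho (Gen R) = Gen Rinv"
| "rho (Gen Rinv) = Gen R"
| "rho One = One"
| "rho (Add x y) = Add (rho x) (rho y)"
| "rho (Smul c x) = Smul c (rho x)"
| "rho (Mul x y) = Mul (rho y) (rho x)"

text \<open>Lambda(n,r), compositions written as lists (lam ! (i-1) = lambda_i).\<close>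
definition Lambda :: "nat \<Rightarrow> nat \<Rightarrow> nat list set" where
  "Lambda n r = {lam. length lam = n \<and> sum_list lam = r}"

definition proj :: "nat \<Rightarrow> nat \<Rightarrow> nat list \<Rightarrow> op" where
  "proj n r lam = (\<lambda>t. if length t = r \<and> (\<forall>i\<in>{1..n}. ccount n (int i) t = lam ! (i - 1))
                      then bas t else (\<lambda>_. 0))"

definition Shat :: "nat \<Rightarrow> nat \<Rightarrow> op set" where
  "Shat n r = range (psi n r)"

end

theory Submission
  imports Defs
begin

text \<open>Operators are matrices \<open>A t u\<close> (the coefficient of \<open>e\<^sub>u\<close> in \<open>A e\<^sub>t\<close>) in a basis that is
  orthonormal for the bilinear form. The generators
  \<open>E\<^sub>i\<close> and \<open>F\<^sub>i = E\<^sub>-\<^sub>i\<close> are adjoint up to the weight factor \<open>q K\<^sub>iK\<^sub>i\<^sub>+\<^sub>1\<^sup>-\<^sup>1\<close>, and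
  \<open>R\<^sup>\<plusminus>\<^sup>1\<close>, \<open>K\<^sub>i\<^sup>\<plusminus>\<^sup>1\<close> are permutation resp. diagonal matrices, so \<open>\<rho>\<close> acts as matrix transposition.
  Hence the diagonal entries of \<open>a \<rho>(a)\<close> and \<open>\<rho>(a) a\<close> are sums of squares of entries of \<open>a\<close>,
  and since \<open>\<rat>(q)\<close> is an ordered field, such a sum vanishes only if all its terms do.\<close>

definition row_finite :: "op \<Rightarrow> bool" where
  "row_finite A \<longleftrightarrow> (\<forall>t. finite {u. A t u \<noteq> 0})"

definition transpose_op :: "op \<Rightarrow> op" where
  "transpose_op A = (\<lambda>t u. A u t)"

lemma transpose_op_transpose_op [simp]: "transpose_op (transpose_op A) = A"
  by (simp add: transpose_op_def)

lemma opcomp_eq_sum: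
  assumes "finite S" "{s. B t s \<noteq> 0} \<subseteq> S"
  shows "opcomp A B t u = (\<Sum>s\<in>S. B t s * A s u)"
  unfolding opcomp_def by (rule sum.mono_neutral_left) (use assms in auto)

lemma row_finite_opcomp:
  assumes "row_finite A" "row_finite B"
  shows "row_finite (opcomp A B)"
  unfolding row_finite_def
proof
  fix t
  have "{u. opcomp A B t u \<noteq> 0} \<subseteq> (\<Union>s\<in>{s. B t s \<noteq> 0}. {u. A s u \<noteq> 0})"
  proof
    fix u assume "u \<in> {u. opcomp A B t u \<noteq> 0}"
    then obtain s where "B t s \<noteq> 0" "B t s * A s u \<noteq> 0"
      unfolding opcomp_def by (auto elim: sum.not_neutral_contains_not_neutral)
    then show "u \<in> (\<Union>s\<in>{s. B t s \<noteq> 0}. {u. A s u \<noteq> 0})" by auto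
  qed
  moreover have "finite (\<Union>s\<in>{s. B t s \<noteq> 0}. {u. A s u \<noteq> 0})"
    using assms unfolding row_finite_def by blast
  ultimately show "finite {u. opcomp A B t u \<noteq> 0}" by (rule finite_subset)
qed

lemma transpose_op_opcomp:
  assumes "row_finite A" "row_finite (transpose_op A)" "row_finite B" "row_finite (transpose_op B)"
  shows "transpose_op (opcomp A B) = opcomp (transpose_op B) (transpose_op A)"
proof (intro ext)
  fix t u
  let ?S = "{s. B u s \<noteq> 0} \<union> {s. A s t \<noteq> 0}"
  have "finite ?S" using assms unfolding row_finite_def transpose_op_def by auto
  then have "transpose_op (opcomp A B) t u = (\<Sum>s\<in>?S. B u s * A s t)"
    and "opcomp (transpose_op B) (transpose_op A) t u
         = (\<Sum>s\<in>?S. transpose_op A t s * transpose_op B s u)"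
    unfolding transpose_op_def by (auto intro: opcomp_eq_sum)
  then show "transpose_op (opcomp A B) t u = opcomp (transpose_op B) (transpose_op A) t u"
    by (simp add: transpose_op_def mult.commute)
qed

lemma transpose_op_eq_zero_op_iff [simp]: "transpose_op A = zero_op \<longleftrightarrow> A = zero_op"
  by (auto simp: transpose_op_def zero_op_def fun_eq_iff)

lemma opcomp_transpose_op_diagonal:
  "opcomp A (transpose_op A) u u = (\<Sum>s\<in>{s. A s u \<noteq> 0}. A s u * A s u)"
  by (simp add: opcomp_def transpose_op_def)

lemma opcomp_transpose_op_neq_zero:
  assumes "row_finite (transpose_op A)" "A \<noteq> zero_op"
  shows "opcomp A (transpose_op A) \<noteq> zero_op"
proof -
  obtain t u where "A t u \<noteq> 0"
    using assms(2) by (auto simp: zero_op_def fun_eq_iff)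
  moreover have "finite {s. A s u \<noteq> 0}"
    using assms(1) by (simp add: row_finite_def transpose_op_def)
  ultimately have "0 < (\<Sum>s\<in>{s. A s u \<noteq> 0}. A s u * A s u)"
    by (intro sum_pos) (auto simp: zero_less_mult_iff)
  then have "opcomp A (transpose_op A) u u \<noteq> 0"
    by (simp add: opcomp_transpose_op_diagonal)
  then show ?thesis
    by (metis zero_op_def)
qed

definition diag_op :: "nat \<Rightarrow> (int list \<Rightarrow> fq) \<Rightarrow> op" where
  "diag_op r d = (\<lambda>s u. if length s = r \<and> s = u then d s else 0)"

lemma opcomp_diag_op:
  assumes "row_finite B"
  shows "opcomp (diag_op r d) B t u = B t u * (if length u = r then d u else 0)"
proof -
  have "opcomp (diag_op r d) B t u
      = (\<Sum>s\<in>{s. B t s \<noteq> 0}. if s = u then B t u * (if length u = r then d u else 0) else 0)"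
    unfolding opcomp_def diag_op_def by (rule sum.cong) auto
  also have "\<dots> = B t u * (if length u = r then d u else 0)"
    using assms by (cases "B t u = 0") (auto simp: row_finite_def)
  finally show ?thesis .
qed

lemma row_finite_diag_op: "row_finite (diag_op r d)"
proof -
  have "{u. diag_op r d t u \<noteq> 0} \<subseteq> {t}" for t
    by (auto simp: diag_op_def)
  then show ?thesis
    unfolding row_finite_def by (meson finite.emptyI finite_insert finite_subset)
qed

lemma opcomp_diag_op_diag_op:
  "opcomp (diag_op r d) (diag_op r e) = diag_op r (\<lambda>s. e s * d s)"
proof (intro ext)
  fix t u
  show "opcomp (diag_op r d) (diag_op r e) t u = diag_op r (\<lambda>s. e s * d s) t u"
    by (simp add: opcomp_diag_op row_finite_diag_op) (auto simp: diag_op_def)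
qed

lemma qq_neq_zero: "qq \<noteq> 0"
  unfolding qq_def by (simp add: Zero_fract_def eq_fract)

lemma qq_powi_add: "qq powi a * qq powi b = qq powi (a + b)"
  by (simp add: power_int_add qq_neq_zero)

lemma kt_Cons: "kt n i (a # w) = kt n i [a] + kt n i w"
  by (simp add: kt_def ccount_def)

lemma mod_neq_mod_succ:
  assumes "n \<ge> 2" "a mod int n = i mod int n"
  shows "a mod int n \<noteq> (i + 1) mod int n"
proof
  assume "a mod int n = (i + 1) mod int n"
  then have "int n dvd (i + 1) - i"
    using assms(2) by (simp add: mod_eq_dvd_iff)
  then show False using assms(1) by simp
qed

lemma kt_single_class:
  assumes "n \<ge> 2" "a mod int n = i mod int n"
  shows "kt n i [a] = 1"
  using mod_neq_mod_succ[OF assms] assms(2) by (simp add: kt_def ccount_def)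

lemma kt_single_succ_class:
  assumes "n \<ge> 2" "a mod int n = (i + 1) mod int n"
  shows "kt n i [a] = -1"
  using mod_neq_mod_succ[OF assms(1), of a i] assms(2) by (auto simp: kt_def ccount_def)
lemma qq_mult_qq_powi: "qq * qq powi k = qq powi (1 + k)"
  using qq_powi_add[of 1 k] by simp

lemma tens1_simps [simp]:
  "tens1 s v [] = 0"
  "tens1 s v (a # u) = (if a = s then v u else 0)"
  by (simp_all add: tens1_def)

lemma gact_E_Cons:
  "gact n (E i) (s # w) [] = 0"
  "gact n (E i) (s # w) (b # u) =
     (if (s - 1) mod int n = i mod int n \<and> b = s - 1 \<and> u = w then qq powi kt n i w else 0)
     + (if b = s then gact n (E i) w u else 0)"
  by (simp_all add: bas_def)

lemma gact_F_Cons: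
  "gact n (F i) (s # w) [] = 0"
  "gact n (F i) (s # w) (b # u) =
     (if b = s then qq powi (- kt n i [s]) * gact n (F i) w u else 0)
     + (if s mod int n = i mod int n \<and> b = s + 1 \<and> u = w then 1 else 0)"
  by (simp_all add: bas_def)

declare gact.simps(6,8) [simp del] gact_E_Cons [simp] gact_F_Cons [simp]

lemma length_gact_EF:
  assumes "g = E i \<or> g = F i"
  shows "gact n g t u \<noteq> 0 \<Longrightarrow> length u = length t"
proof (induction t arbitrary: u)
  case (Cons s w)
  then show ?case
    using assms by (cases u) (auto split: if_splits)
qed (use assms in auto)

lemma length_gact:
  assumes "gact n g t u \<noteq> 0" shows "length u = length t"
proof (cases g)
  case (E i) then show ?thesis using assms length_gact_EF by blast
next
  case (F i) then show ?thesis using assms length_gact_EF by blast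
qed (use assms in \<open>auto simp: bas_def split: if_splits\<close>)

lemma finite_gact_EF_support:
  assumes "g = E i \<or> g = F i"
  shows "finite {u. gact n g t u \<noteq> 0}"
proof (induction t)
  case (Cons s w)
  have "{u. gact n g (s # w) u \<noteq> 0}
      \<subseteq> {(s - 1) # w, (s + 1) # w} \<union> Cons s ` {u. gact n g w u \<noteq> 0}"
  proof
    fix u assume "u \<in> {u. gact n g (s # w) u \<noteq> 0}"
    then show "u \<in> {(s - 1) # w, (s + 1) # w} \<union> Cons s ` {u. gact n g w u \<noteq> 0}"
      using assms by (cases u) (auto split: if_splits)
  qed
  then show ?case by (rule finite_subset) (use Cons.IH in simp)
qed (use assms in auto)

lemma finite_gact_support: "finite {u. gact n g t u \<noteq> 0}"
proof (cases g)
  case (E i) then show ?thesis using finite_gact_EF_support by blast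
next
  case (F i) then show ?thesis using finite_gact_EF_support by blast
qed (auto simp: bas_def)

lemma gact_E_eq_gact_F_transposed:
  assumes n: "n \<ge> 2"
  shows "gact n (E i) u t = qq powi (1 + kt n i u) * gact n (F i) t u"
proof (induction t arbitrary: u)
  case Nil then show ?case by (cases u) simp_all
next
  case (Cons a t')
  show ?case
  proof (cases u)
    case Nil then show ?thesis by simp
  next
    case (Cons b u')
    note IH = Cons.IH[of u']
    consider "a = b" | "b = a + 1" | "a \<noteq> b" "b \<noteq> a + 1" by blast
    then show ?thesis
    proof cases
      case 1
      then show ?thesis
        unfolding Cons by (simp add: IH mult.assoc[symmetric] qq_powi_add kt_Cons[of n i b u'])
    next
      case 2
      show ?thesis
      proof (cases "a mod int n = i mod int n \<and> t' = u'")
        case True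
        have "(a + 1) mod int n = (i + 1) mod int n"
          by (rule mod_add_cong) (use True in simp_all)
        then have "kt n i [b] = -1" using 2 kt_single_succ_class[OF n] by simp
        then have "1 + kt n i (b # u') = kt n i u'" using kt_Cons[of n i b u'] by simp
        then show ?thesis using True 2 unfolding Cons by simp
      next
        case False
        then show ?thesis using 2 unfolding Cons by auto
      qed
    next
      case 3
      then show ?thesis unfolding Cons by auto
    qed
  qed
qed

lemma gact_F_eq_gact_E_transposed:
  assumes n: "n \<ge> 2"
  shows "gact n (F i) u t = qq powi (1 - kt n i u) * gact n (E i) t u"
proof (induction t arbitrary: u)
  case Nil then show ?case by (cases u) simp_all
next
  case (Cons a t')
  show ?case
  proof (cases u)
    case Nil then show ?thesis by simp
  next
    case (Cons b u')
    note IH = Cons.IH[of u']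
    consider "a = b" | "a = b + 1" | "a \<noteq> b" "a \<noteq> b + 1" by blast
    then show ?thesis
    proof cases
      case 1
      then show ?thesis
        unfolding Cons
        by (simp add: IH mult.assoc[symmetric] qq_powi_add kt_Cons[of n i b u'] add.commute diff_diff_eq)
    next
      case 2
      show ?thesis
      proof (cases "b mod int n = i mod int n \<and> t' = u'")
        case True
        have "1 - kt n i (b # u') + kt n i t' = 0"
          using kt_single_class[OF n] True kt_Cons[of n i b u'] by simp
        then show ?thesis using True 2 unfolding Cons by (simp add: qq_powi_add)
      next
        case False
        then show ?thesis using 2 unfolding Cons by auto
      qed
    next
      case 3
      then show ?thesis unfolding Cons by auto
    qed
  qed
qed

lemma psi_K: "psi n r (Gen (K j)) = diag_op r (\<lambda>s. qq powi int (ccount n j s))"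
  and psi_Kinv: "psi n r (Gen (Kinv j)) = diag_op r (\<lambda>s. qq powi - int (ccount n j s))"
  by (auto simp: diag_op_def bas_def fun_eq_iff)

lemma row_finite_psi: "row_finite (psi n r x)"
proof (induction x)
  case (Gen g)
  have "{u. psi n r (Gen g) t u \<noteq> 0} \<subseteq> {u. gact n g t u \<noteq> 0}" for t
    by auto
  then show ?case
    unfolding row_finite_def using finite_gact_support finite_subset by blast
next
  case One
  have "{u. psi n r One t u \<noteq> 0} \<subseteq> {t}" for t
    by (auto simp: bas_def)
  then show ?case
    unfolding row_finite_def by (meson finite.emptyI finite_insert finite_subset)
next
  case (Add x y)
  have "{u. psi n r (Add x y) t u \<noteq> 0}
      \<subseteq> {u. psi n r x t u \<noteq> 0} \<union> {u. psi n r y t u \<noteq> 0}" for t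
    by auto
  with Add show ?case
    unfolding row_finite_def by (meson finite_UnI finite_subset)
next
  case (Smul c x)
  have "{u. psi n r (Smul c x) t u \<noteq> 0} \<subseteq> {u. psi n r x t u \<noteq> 0}" for t
    by auto
  with Smul show ?case
    unfolding row_finite_def by (meson finite_subset)
qed (simp add: row_finite_opcomp)

lemma psi_weight_E:
  "psi n r (Mul (Mul (Gen (K i)) (Gen (Kinv (i + 1)))) x) t u
     = psi n r x t u * (if length u = r then qq powi kt n i u else 0)"
  unfolding psi.simps(5) psi_K psi_Kinv opcomp_diag_op_diag_op
  by (simp add: opcomp_diag_op row_finite_psi qq_powi_add kt_def del: power_int_of_nat)

lemma psi_weight_F:
  "psi n r (Mul (Mul (Gen (Kinv i)) (Gen (K (i + 1)))) x) t u
     = psi n r x t u * (if length u = r then qq powi - kt n i u else 0)"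
  unfolding psi.simps(5) psi_K psi_Kinv opcomp_diag_op_diag_op
  by (simp add: opcomp_diag_op row_finite_psi qq_powi_add kt_def del: power_int_of_nat)

lemma map_diff_one_eq_iff: "u = map (\<lambda>x. x - 1) t \<longleftrightarrow> t = map (\<lambda>x. x + 1) (u :: int list)"
proof (induction t arbitrary: u)
  case (Cons a t) then show ?case by (cases u) auto
qed auto

lemma psi_rho_Gen:
  assumes n: "n \<ge> 2"
  shows "psi n r (rho (Gen g)) = transpose_op (psi n r (Gen g))"
proof (intro ext)
  fix t u
  show "psi n r (rho (Gen g)) t u = transpose_op (psi n r (Gen g)) t u"
  proof (cases g)
    case (E i)
    have rho_entry: "psi n r (rho (Gen g)) t u
        = qq * (psi n r (Gen (F i)) t u * (if length u = r then qq powi kt n i u else 0))"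
      unfolding E rho.simps psi.simps(4) psi_weight_E ..
    show ?thesis
    proof (cases "length u = r \<and> gact n (F i) t u \<noteq> 0")
      case True
      then have "length t = r" using length_gact by metis
      with True show ?thesis unfolding rho_entry using E
        by (simp add: transpose_op_def gact_E_eq_gact_F_transposed[OF n]
            qq_mult_qq_powi ac_simps)
    next
      case False
      then show ?thesis unfolding rho_entry using E
        by (auto simp: transpose_op_def gact_E_eq_gact_F_transposed[OF n])
    qed
  next
    case (F i)
    have rho_entry: "psi n r (rho (Gen g)) t u
        = qq * (psi n r (Gen (E i)) t u * (if length u = r then qq powi - kt n i u else 0))"
      unfolding F rho.simps psi.simps(4) psi_weight_F ..
    show ?thesis
    proof (cases "length u = r \<and> gact n (E i) t u \<noteq> 0")
      case True
      then have "length t = r" using length_gact by metis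
      with True show ?thesis unfolding rho_entry using F
        by (simp add: transpose_op_def gact_F_eq_gact_E_transposed[OF n]
            qq_mult_qq_powi ac_simps)
    next
      case False
      then show ?thesis unfolding rho_entry using F
        by (auto simp: transpose_op_def gact_F_eq_gact_E_transposed[OF n])
    qed
  qed (auto simp: transpose_op_def bas_def map_diff_one_eq_iff)
qed

lemma psi_rho:
  assumes "n \<ge> 2"
  shows "psi n r (rho x) = transpose_op (psi n r x)"
proof (induction x)
  case (Gen g)
  show ?case using psi_rho_Gen[OF assms] .
next
  case (Mul x y)
  then have "row_finite (transpose_op (psi n r x))" "row_finite (transpose_op (psi n r y))"
    using row_finite_psi by metis+
  with Mul show ?case
    by (simp add: transpose_op_opcomp row_finite_psi)
qed (auto simp: transpose_op_def bas_def fun_eq_iff)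

theorem lemma3p8:
  fixes n r :: nat and lam mu :: "nat list" and x :: uexp
  assumes "n \<ge> 3" and "r \<ge> 1"
    and "lam \<in> Lambda n r" and "mu \<in> Lambda n r"
    and "opcomp (proj n r lam) (opcomp (psi n r x) (proj n r mu)) = psi n r x"
    and "psi n r x \<noteq> zero_op"
  shows "opcomp (psi n r x) (psi n r (rho x)) \<noteq> zero_op
       \<and> opcomp (psi n r (rho x)) (psi n r x) \<noteq> zero_op"
proof -
  let ?A = "psi n r x"
  have rho: "psi n r (rho x) = transpose_op ?A"
    using psi_rho assms(1) by simp
  have "row_finite (transpose_op ?A)" and "row_finite (transpose_op (transpose_op ?A))"
    using row_finite_psi[of n r x] row_finite_psi[of n r "rho x"] by (simp_all add: rho)
  then show ?thesis
    using opcomp_transpose_op_neq_zero[of ?A] opcomp_transpose_op_neq_zero[of "transpose_op ?A"]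
      assms(6)
    unfolding rho by simp
qed

end
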